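(* Let $b\ge2$ be an integer, $0<\alpha<\tfrac12$, and let $\Phi=\Phi^{\alpha,b}_{\mathcal{G}}\colon\mathbb{S}^1\to\mathbb{R}^d$ be an $\alpha$-bi-Hölder Weierstrass embedding. Let $W\in\mathcal{W}^{\alpha,b}$. Then for $\mathcal{L}^d$-almost every $\mathbf{t}\in\mathbb{R}^d$, the occupation measure $\lambda_{\mathbf{t}}=(W_{\mathbf{t}})_*\mathcal{L}^1$ of $W_{\mathbf{t}}(x)=W(x)+\langle\mathbf{t},\Phi(x)\rangle$ is absolutely continuous with respect to Lebesgue measure, with a bounded and continuous density.
   Context: $\mathbb{S}^1$ is identified with $\mathbb{R}/\mathbb{Z}$, i.e. with $[0,1)$ carrying Lebesgue measure $\mathcal{L}^1$. For an integer $b\ge2$, $0<\alpha<1$ and a Lipschitz $g\colon\mathbb{S}^1\to\mathbb{R}$, $W_g^{\alpha,b}(x)=\sum_{k=0}^\infty b^{-\alpha k}g(b^kx)$; $\mathcal{W}^{\alpha,b}$ is the family of all such functions. For $\mathcal{G}=\{g_0,\dots,g_{d-1}\}$ Lipschitz on $\mathbb{S}^1$, $\Phi^{\alpha,b}_{\mathcal{G}}(x)=(W^{\alpha,b}_{g_0}(x),\dots,W^{\alpha,b}_{g_{d-1}}(x))$. $\Phi$ is $\alpha$-bi-Hölder if $c_1|x-y|^\alpha\le\|\Phi(x)-\Phi(y)\|\le c_2|x-y|^\alpha$ for all $x,y$, with constants $c_1,c_2>0$ and $\|\cdot\|$ the $\ell^\infty$ norm. *)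

theory Defs
  imports "HOL-Analysis.Analysis"
begin

text \<open>The circle S^1 = R/Z is modelled by 1-periodic functions on the reals;
  points of S^1 are represented by reals, with the quotient (circle) distance.\<close>

definition periodic1 :: "(real \<Rightarrow> 'a) \<Rightarrow> bool" where
  "periodic1 g \<longleftrightarrow> (\<forall>x. g (x + 1) = g x)"

text \<open>A Lipschitz function on S^1 (for 1-periodic functions, Lipschitz for the
  circle distance is the same as Lipschitz on the reals).\<close>
definition lipschitz_S1 :: "(real \<Rightarrow> real) \<Rightarrow> bool" where
  "lipschitz_S1 g \<longleftrightarrow> periodic1 g \<and> (\<exists>C. C-lipschitz_on UNIV g)"

definition dist_S1 :: "real \<Rightarrow> real \<Rightarrow> real" where
  "dist_S1 x y = min (frac (x - y)) (1 - frac (x - y))"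

definition weierstrass :: "real \<Rightarrow> nat \<Rightarrow> (real \<Rightarrow> real) \<Rightarrow> real \<Rightarrow> real" where
  "weierstrass \<alpha> b g x = (\<Sum>k. (real b) powr (- \<alpha> * real k) * g ((real b) ^ k * x))"

text \<open>The vector-valued Weierstrass map Phi_G = (W_{g_0}, ..., W_{g_{d-1}}),
  with the coordinates indexed by a finite type 'd (so d = CARD('d)).\<close>
definition weierstrass_map ::
    "real \<Rightarrow> nat \<Rightarrow> ('d::finite \<Rightarrow> real \<Rightarrow> real) \<Rightarrow> real \<Rightarrow> real ^ 'd" where
  "weierstrass_map \<alpha> b G x = (\<chi> i. weierstrass \<alpha> b (G i) x)"

definition linf_norm :: "real ^ 'd::finite \<Rightarrow> real" where
  "linf_norm v = Max (range (\<lambda>i. \<bar>v $ i\<bar>))"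

definition bi_holder :: "real \<Rightarrow> (real \<Rightarrow> real ^ 'd::finite) \<Rightarrow> bool" where
  "bi_holder \<alpha> \<Phi> \<longleftrightarrow> (\<exists>c1 c2. c1 > 0 \<and> c2 > 0 \<and>
     (\<forall>x y. c1 * dist_S1 x y powr \<alpha> \<le> linf_norm (\<Phi> x - \<Phi> y) \<and>
            linf_norm (\<Phi> x - \<Phi> y) \<le> c2 * dist_S1 x y powr \<alpha>))"

end

theory Submission
  imports Defs "HOL-Probability.Probability"
begin

text \<open>
  Randomise \<open>t\<close> by the standard Gaussian measure \<open>\<gamma>\<close> on \<open>\<real>\<^sup>d\<close> and let
  \<open>\<phi>\<^sub>t(\<xi>) = \<integral>\<^sub>0\<^sup>1 exp(i\<xi>(W(x) + \<langle>t, \<Phi>(x)\<rangle>)) dx\<close> be the characteristic function of the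
  occupation measure. Jensen's inequality, Fubini and the Gaussian characteristic function give
  \<open>(\<integral>|\<phi>\<^sub>t(\<xi>)| d\<gamma>(t))\<^sup>2 \<le> \<integral>\<integral> exp(-\<xi>\<^sup>2 |\<Phi>(x) - \<Phi>(y)|\<^sup>2 / 2) dx dy\<close>, and the lower
  Hoelder bound \<open>|\<Phi>(x) - \<Phi>(y)| \<ge> c d(x,y)\<^sup>\<alpha>\<close> makes the right-hand side \<open>O(|\<xi>|^(-2q))\<close>
  for every \<open>q\<close> with \<open>2\<alpha>q < 1\<close>. Since \<open>\<alpha> < 1/2\<close> one may take \<open>q > 1\<close>, so that
  \<open>\<integral>\<integral>|\<phi>\<^sub>t(\<xi>)| d\<xi> d\<gamma>(t) < \<infinity>\<close>: for almost every \<open>t\<close> the function \<open>\<phi>\<^sub>t\<close> is integrable,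
  and Fourier inversion gives the occupation measure a bounded continuous density.
  Only measurability of \<open>W\<close> and \<open>\<Phi>\<close> and the lower Hoelder bound enter.
\<close>

section \<open>Fourier inversion for integrable characteristic functions\<close>

lemma integrable_indicator_Ioo_continuous:
  fixes f :: "real \<Rightarrow> 'a::{banach, second_countable_topology}"
  assumes "continuous_on UNIV f"
  shows "integrable lborel (\<lambda>s. indicator {a<..<b} s *\<^sub>R f s)"
proof -
  have "integrable lborel (\<lambda>s. indicator {a<..<b} s *\<^sub>R (indicator {a..b} s *\<^sub>R f s))"
    using borel_integrable_compact[of "{a..b}" f] assms
    by (intro integrable_mult_indicator[where f="\<lambda>s. indicator {a..b} s *\<^sub>R f s"])
       (auto intro: continuous_on_subset)
  moreover have "(\<lambda>s. indicator {a<..<b} s *\<^sub>R (indicator {a..b} s *\<^sub>R f s)) =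
      (\<lambda>s. indicator {a<..<b} s *\<^sub>R f s)"
    by (auto split: split_indicator)
  ultimately show ?thesis by simp
qed

lemma measure_eqI_Ioc:
  fixes M N :: "real measure"
  assumes sets: "sets M = sets borel" "sets N = sets borel"
    and fin: "\<And>a b. emeasure M {a<..b} < \<infinity>"
    and eq: "\<And>a b. a \<le> b \<Longrightarrow> emeasure M {a<..b} = emeasure N {a<..b}"
  shows "M = N"
proof (rule measure_eqI_generator_eq[where \<Omega>=UNIV and E="range (\<lambda>(a, b). {a<..b})"
      and A="\<lambda>i. {- real i<..real i}"])
  fix X assume "X \<in> range (\<lambda>(a, b). {a<..b::real})"
  then obtain a b where X: "X = {a<..b}" by auto
  then show "emeasure M X = emeasure N X"
    using eq by (cases "a \<le> b") auto
next
  show "sets M = sigma_sets UNIV (range (\<lambda>(a, b). {a<..b::real}))"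
    "sets N = sigma_sets UNIV (range (\<lambda>(a, b). {a<..b::real}))"
    unfolding sets borel_sigma_sets_Ioc by simp_all
next
  show "emeasure M {- real i<..real i} \<noteq> \<infinity>" for i
    using fin[of "- real i" "real i"] by simp
qed (auto simp: Int_stable_def UN_Ioc_eq_UNIV)

lemma continuous_nonneg_if_Ioo_integrals_nonneg:
  fixes f :: "real \<Rightarrow> real"
  assumes cont: "continuous_on UNIV f"
    and nonneg: "\<And>a b. a \<le> b \<Longrightarrow> 0 \<le> (LINT x|lborel. indicator {a<..<b} x * f x)"
  shows "0 \<le> f s"
proof (rule ccontr)
  assume "\<not> 0 \<le> f s"
  then have fs: "f s < 0" by simp
  then obtain d where d: "d > 0" "\<And>y. dist y s < d \<Longrightarrow> dist (f y) (f s) < - f s / 2"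
    using cont unfolding continuous_on_iff by (metis UNIV_I neg_0_less_iff_less half_gt_zero)
  define a where "a = s - d"
  have "(LINT x|lborel. indicator {a<..<s} x * f x) \<le> (LINT x|lborel. indicator {a<..<s} x * (f s / 2))"
  proof (rule integral_mono)
    show "integrable lborel (\<lambda>x. indicator {a<..<s} x * f x)"
      using integrable_indicator_Ioo_continuous[OF cont] by simp
    show "indicator {a<..<s} x * f x \<le> indicator {a<..<s} x * (f s / 2)" for x
      using d(2)[of x] by (auto simp: a_def dist_real_def split: split_indicator)
    show "integrable lborel (\<lambda>x. indicator {a<..<s} x * (f s / 2))"
      using integrable_indicator_Ioo_continuous[of "\<lambda>_. f s / 2"] by simp
  qed
  also have "\<dots> = f s / 2 * d"
    using d by (simp add: a_def)
  also have "\<dots> < 0"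
    using fs d by (simp add: mult_neg_pos)
  finally show False
    using nonneg[of a s] d by (simp add: a_def)
qed

lemma (in real_distribution) measure_singleton_eq_0_if_Ioc_bound:
  assumes bound: "\<And>a b. a \<le> b \<Longrightarrow> measure M {a} = 0 \<Longrightarrow> measure M {b} = 0 \<Longrightarrow>
      measure M {a<..b} \<le> B * (b - a)"
  shows "measure M {c} = 0"
proof -
  have le: "measure M {c} \<le> 2 * \<bar>B\<bar> * e" if e: "e > 0" for e
  proof -
    let ?A = "{x. measure M {x} \<noteq> 0}"
    have "countable ?A" by (rule countable_support)
    then obtain a b where a: "a \<in> {c - e<..<c}" "a \<notin> ?A" and b: "b \<in> {c<..<c + e}" "b \<notin> ?A"
      using open_minus_countable[of ?A "{c - e<..<c}"] open_minus_countable[of ?A "{c<..<c + e}"] e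
      by auto
    have "measure M {c} \<le> measure M {a<..b}"
      using a b by (intro finite_measure_mono) auto
    also have "\<dots> \<le> B * (b - a)"
      using a b by (intro bound) auto
    also have "\<dots> \<le> \<bar>B\<bar> * (b - a)"
      using a b by (intro mult_right_mono) auto
    also have "\<dots> \<le> \<bar>B\<bar> * (2 * e)"
      using a b by (intro mult_left_mono) auto
    finally show ?thesis by simp
  qed
  have "measure M {c} \<le> 0"
  proof (rule field_le_epsilon)
    fix e :: real assume "0 < e"
    then have "measure M {c} \<le> 2 * \<bar>B\<bar> * (e / (2 * \<bar>B\<bar> + 1))"
      by (intro le) (simp add: pos_add_strict)
    also have "\<dots> \<le> e"
      using \<open>0 < e\<close> by (simp add: field_simps)
    finally show "measure M {c} \<le> 0 + e" by simp
  qed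
  then show ?thesis
    using measure_nonneg[of M "{c}"] by linarith
qed

definition inv_fourier :: "(real \<Rightarrow> complex) \<Rightarrow> real \<Rightarrow> complex" where
  "inv_fourier \<phi> s = (CLINT \<xi>|lborel. iexp (-(\<xi> * s)) * \<phi> \<xi>) / (2 * pi)"

lemma isCont_inv_fourier:
  assumes "integrable lborel \<phi>"
  shows "isCont (inv_fourier \<phi>) s"
proof -
  have [measurable]: "\<phi> \<in> borel_measurable borel"
    using assms by (simp add: borel_measurable_integrable)
  have "isCont (\<lambda>s. CLINT \<xi>|lborel. iexp (-(\<xi> * s)) * \<phi> \<xi>) s"
    unfolding continuous_at_sequentially comp_def
  proof safe
    fix X assume "X \<longlonglongrightarrow> s"
    then show "(\<lambda>n. CLINT \<xi>|lborel. iexp (-(\<xi> * X n)) * \<phi> \<xi>) \<longlonglongrightarrow> (CLINT \<xi>|lborel. iexp (-(\<xi> * s)) * \<phi> \<xi>)"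
      using assms
      by (intro integral_dominated_convergence[where w="\<lambda>\<xi>. norm (\<phi> \<xi>)"])
         (auto intro!: tendsto_intros simp: norm_mult norm_exp_i_times)
  qed
  then show ?thesis
    unfolding inv_fourier_def[abs_def] by (intro continuous_divide) auto
qed

lemma norm_inv_fourier_le: "norm (inv_fourier \<phi> s) \<le> (LINT \<xi>|lborel. norm (\<phi> \<xi>)) / (2 * pi)"
proof -
  have "norm (CLINT \<xi>|lborel. iexp (-(\<xi> * s)) * \<phi> \<xi>) \<le> (LINT \<xi>|lborel. norm (iexp (-(\<xi> * s)) * \<phi> \<xi>))"
    by (rule integral_norm_bound)
  then show ?thesis
    by (simp add: inv_fourier_def norm_divide norm_mult norm_exp_i_times divide_right_mono)
qed

lemma Levy_kernel_eq_integral: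
  assumes "a \<le> b" "\<xi> \<noteq> 0"
  shows "(iexp (-(\<xi> * a)) - iexp (-(\<xi> * b))) / (\<i> * \<xi>) =
    (CLINT s|lborel. indicator {a<..<b} s *\<^sub>R iexp (-(\<xi> * s)))"
proof -
  have "(CLBINT s=a..b. iexp (-(\<xi> * s))) = \<i> * iexp (-(\<xi> * b)) / \<xi> - \<i> * iexp (-(\<xi> * a)) / \<xi>"
  proof (rule interval_integral_FTC_finite)
    show "continuous_on {min a b..max a b} (\<lambda>s. iexp (- (\<xi> * s)))"
      by (intro continuous_intros)
    show "((\<lambda>s. \<i> * iexp (-(\<xi> * s)) / \<xi>) has_vector_derivative iexp (- (\<xi> * x)))
        (at x within {min a b..max a b})" for x
      using assms(2)
      by (auto intro!: derivative_eq_intros simp: has_vector_derivative_complex_iff Re_exp Im_exp field_simps)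
  qed
  also have "\<dots> = (iexp (-(\<xi> * a)) - iexp (-(\<xi> * b))) / (\<i> * \<xi>)"
    using assms(2) by (simp add: field_simps)
  finally have ftc: "(CLBINT s=a..b. iexp (-(\<xi> * s))) = (iexp (-(\<xi> * a)) - iexp (-(\<xi> * b))) / (\<i> * \<xi>)" .
  have "(CLBINT s=a..b. iexp (-(\<xi> * s))) = (CLINT s|lborel. indicator {a<..<b} s *\<^sub>R iexp (-(\<xi> * s)))"
    using assms(1) by (simp add: interval_lebesgue_integral_def set_lebesgue_integral_def einterval_eq)
  with ftc show ?thesis by simp
qed

lemma (in real_distribution) Levy_Inversion_integrable:
  assumes int: "integrable lborel (char M)"
    and ab: "a \<le> b" "measure M {a} = 0" "measure M {b} = 0"
  shows "complex_of_real (measure M {a<..b}) =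
    (CLINT \<xi>|lborel. (iexp (-(\<xi> * a)) - iexp (-(\<xi> * b))) / (\<i> * \<xi>) * char M \<xi>) / (2 * pi)"
proof -
  define F where "F \<xi> = (iexp (-(\<xi> * a)) - iexp (-(\<xi> * b))) / (\<i> * \<xi>) * char M \<xi>" for \<xi> :: real
  have [measurable]: "F \<in> borel_measurable borel"
    unfolding F_def by measurable
  have F_le: "norm (F \<xi>) \<le> (b - a) * norm (char M \<xi>)" for \<xi>
  proof -
    have "norm ((iexp (-(\<xi> * a)) - iexp (-(\<xi> * b))) / (\<i> * \<xi>)) \<le> b - a"
    proof (cases "\<xi> = 0")
      case False
      have "(iexp (-(\<xi> * a)) - iexp (-(\<xi> * b))) / (\<i> * \<xi>) =
          (iexp ((-\<xi>) * b) - iexp ((-\<xi>) * a)) / (\<i> * (-\<xi>))"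
        using False by (simp add: field_simps)
      then show ?thesis
        using Levy_Inversion_aux2[OF ab(1), of "-\<xi>"] False by simp
    qed (use ab in simp)
    then show ?thesis
      unfolding F_def norm_mult by (intro mult_right_mono) auto
  qed
  have "(\<lambda>T::nat. CLINT \<xi>|lborel. indicator {- real T<..<real T} \<xi> *\<^sub>R F \<xi>) \<longlonglongrightarrow> (CLINT \<xi>|lborel. F \<xi>)"
  proof (rule integral_dominated_convergence[where w="\<lambda>\<xi>. (b - a) * norm (char M \<xi>)"])
    show "AE \<xi> in lborel. (\<lambda>T::nat. indicator {- real T<..<real T} \<xi> *\<^sub>R F \<xi>) \<longlonglongrightarrow> F \<xi>"
    proof (rule AE_I2, rule tendsto_eventually)
      fix \<xi> :: real
      obtain N :: nat where "\<bar>\<xi>\<bar> < real N"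
        using reals_Archimedean2 by blast
      then show "\<forall>\<^sub>F T in sequentially. indicator {- real T<..<real T} \<xi> *\<^sub>R F \<xi> = F \<xi>"
        unfolding eventually_sequentially by (intro exI[of _ N]) (auto simp: indicator_def)
    qed
  qed (use int F_le ab in \<open>auto simp: mult_right_mono split: split_indicator\<close>)
  then have "(\<lambda>T::nat. 1 / (2 * pi) * (CLBINT \<xi>=-real T..real T. F \<xi>)) \<longlonglongrightarrow> 1 / (2 * pi) * (CLINT \<xi>|lborel. F \<xi>)"
    by (intro tendsto_mult tendsto_const)
       (simp add: interval_lebesgue_integral_def set_lebesgue_integral_def einterval_eq)
  moreover have "(\<lambda>T::nat. 1 / (2 * pi) * (CLBINT \<xi>=-real T..real T. F \<xi>)) \<longlonglongrightarrow> measure M {a<..b}"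
    using Levy_Inversion[OF ab] unfolding F_def by simp
  ultimately show ?thesis
    unfolding F_def[symmetric] by (simp add: LIMSEQ_unique)
qed

lemma integral_Levy_kernel_Fubini:
  fixes \<phi> :: "real \<Rightarrow> complex"
  assumes int: "integrable lborel \<phi>" and "a \<le> b"
  shows "(CLINT \<xi>|lborel. (iexp (-(\<xi> * a)) - iexp (-(\<xi> * b))) / (\<i> * \<xi>) * \<phi> \<xi>) =
    (CLINT s|lborel. indicator {a<..<b} s *\<^sub>R (CLINT \<xi>|lborel. iexp (-(\<xi> * s)) * \<phi> \<xi>))"
proof -
  have [measurable]: "\<phi> \<in> borel_measurable borel"
    using int by (simp add: borel_measurable_integrable)
  define H where "H \<xi> s = indicator {a<..<b} s *\<^sub>R (iexp (-(\<xi> * s)) * \<phi> \<xi>)" for \<xi> s :: real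
  have [measurable]: "case_prod H \<in> borel_measurable (lborel \<Otimes>\<^sub>M lborel)"
    unfolding H_def by measurable
  have P: "pair_sigma_finite (lborel :: real measure) (lborel :: real measure)" ..
  have norm_H: "(LINT s|lborel. norm (H \<xi> s)) = (b - a) * norm (\<phi> \<xi>)" for \<xi>
  proof -
    have "(LINT s|lborel. norm (H \<xi> s)) = (LINT s|lborel. indicator {a<..<b} s * norm (\<phi> \<xi>))"
      unfolding H_def by (intro Bochner_Integration.integral_cong) (auto simp: norm_mult split: split_indicator)
    then show ?thesis
      using assms(2) by simp
  qed
  have "integrable (lborel \<Otimes>\<^sub>M lborel) (case_prod H)"
  proof (rule pair_sigma_finite.Fubini_integrable[OF P])
    show "integrable lborel (\<lambda>\<xi>. LINT s|lborel. norm (case_prod H (\<xi>, s)))"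
      using int by (simp add: norm_H)
    have "integrable lborel (\<lambda>s. indicator {a<..<b} s *\<^sub>R (iexp (-(\<xi> * s)) * \<phi> \<xi>))" for \<xi>
      by (rule integrable_indicator_Ioo_continuous) (intro continuous_intros)
    then show "AE \<xi> in lborel. integrable lborel (\<lambda>s. case_prod H (\<xi>, s))"
      by (simp add: H_def)
  qed simp
  then have "(CLINT \<xi>|lborel. CLINT s|lborel. H \<xi> s) = (CLINT s|lborel. CLINT \<xi>|lborel. H \<xi> s)"
    by (rule pair_sigma_finite.Fubini_integral[OF P, symmetric])
  moreover have "(CLINT \<xi>|lborel. (iexp (-(\<xi> * a)) - iexp (-(\<xi> * b))) / (\<i> * \<xi>) * \<phi> \<xi>) =
      (CLINT \<xi>|lborel. CLINT s|lborel. H \<xi> s)"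
  proof (rule integral_cong_AE)
    show "AE \<xi> in lborel. (iexp (-(\<xi> * a)) - iexp (-(\<xi> * b))) / (\<i> * \<xi>) * \<phi> \<xi> =
        (CLINT s|lborel. H \<xi> s)"
      using AE_lborel_singleton[of 0]
    proof eventually_elim
      case (elim \<xi>)
      show ?case
        unfolding Levy_kernel_eq_integral[OF assms(2) elim] H_def by (simp flip: integral_mult_left_zero)
    qed
  qed auto
  ultimately show ?thesis
    by (simp add: H_def)
qed

lemma (in real_distribution) measure_Ioc_eq_integral_inv_fourier:
  assumes int: "integrable lborel (char M)"
    and ab: "a \<le> b" "measure M {a} = 0" "measure M {b} = 0"
  shows "measure M {a<..b} = (LINT s|lborel. indicator {a<..<b} s * Re (inv_fourier (char M) s))"
proof -
  have "continuous_on UNIV (inv_fourier (char M))"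
    using isCont_inv_fourier[OF int] by (simp add: continuous_at_imp_continuous_on)
  then have int_Ioo: "integrable lborel (\<lambda>s. indicator {a<..<b} s *\<^sub>R inv_fourier (char M) s)"
    by (rule integrable_indicator_Ioo_continuous)
  have "complex_of_real (measure M {a<..b}) =
      (CLINT s|lborel. indicator {a<..<b} s *\<^sub>R (CLINT \<xi>|lborel. iexp (-(\<xi> * s)) * char M \<xi>)) / (2 * pi)"
    using Levy_Inversion_integrable[OF int ab] integral_Levy_kernel_Fubini[OF int ab(1)] by simp
  also have "\<dots> = (CLINT s|lborel. indicator {a<..<b} s *\<^sub>R (CLINT \<xi>|lborel. iexp (-(\<xi> * s)) * char M \<xi>) / (2 * pi))"
    by (rule integral_divide_zero[symmetric])
  also have "\<dots> = (CLINT s|lborel. indicator {a<..<b} s *\<^sub>R inv_fourier (char M) s)"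
    by (intro Bochner_Integration.integral_cong) (simp_all add: inv_fourier_def scaleR_conv_of_real)
  finally have "complex_of_real (measure M {a<..b}) = \<dots>" .
  then have "measure M {a<..b} = Re (CLINT s|lborel. indicator {a<..<b} s *\<^sub>R inv_fourier (char M) s)"
    by (metis Re_complex_of_real)
  also have "\<dots> = (LINT s|lborel. Re (indicator {a<..<b} s *\<^sub>R inv_fourier (char M) s))"
    by (rule integral_bounded_linear[OF bounded_linear_Re int_Ioo, symmetric])
  also have "\<dots> = (LINT s|lborel. indicator {a<..<b} s * Re (inv_fourier (char M) s))"
    by (intro Bochner_Integration.integral_cong) (auto split: split_indicator)
  finally show ?thesis .
qed

lemma (in real_distribution) density_if_measure_Ioc_eq_integral:
  assumes cont: "continuous_on UNIV f"
    and Ioc: "\<And>a b. a \<le> b \<Longrightarrow> measure M {a<..b} = (LINT s|lborel. indicator {a<..<b} s * f s)"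
  shows "(\<forall>s. 0 \<le> f s) \<and> M = density lborel (\<lambda>s. ennreal (f s))"
proof -
  have [measurable]: "f \<in> borel_measurable borel"
    using cont by (rule borel_measurable_continuous_onI)
  have int_f: "integrable lborel (\<lambda>s. indicator {a<..<b} s * f s)" for a b
    using integrable_indicator_Ioo_continuous[OF cont] by simp
  have nonneg: "0 \<le> f s" for s
    using cont by (rule continuous_nonneg_if_Ioo_integrals_nonneg) (simp add: Ioc[symmetric])
  have "M = density lborel (\<lambda>s. ennreal (f s))"
  proof (rule measure_eqI_Ioc)
    show "emeasure M {a<..b} = emeasure (density lborel (\<lambda>s. ennreal (f s))) {a<..b}" if "a \<le> b" for a b
    proof -
      have "emeasure (density lborel (\<lambda>s. ennreal (f s))) {a<..b} = (\<integral>\<^sup>+s. ennreal (f s) * indicator {a<..b} s \<partial>lborel)"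
        by (rule emeasure_density) auto
      also have "\<dots> = (\<integral>\<^sup>+s. ennreal (indicator {a<..<b} s * f s) \<partial>lborel)"
        using AE_lborel_singleton[of b]
        by (intro nn_integral_cong_AE) (auto elim!: eventually_mono split: split_indicator)
      also have "\<dots> = ennreal (LINT s|lborel. indicator {a<..<b} s * f s)"
        by (intro nn_integral_eq_integral int_f) (auto simp: nonneg)
      finally show ?thesis
        using Ioc[OF that] by (simp add: emeasure_eq_measure)
    qed
  qed (simp_all add: emeasure_eq_measure)
  with nonneg show ?thesis
    by blast
qed

theorem (in real_distribution) integrable_char_imp_bounded_continuous_density:
  assumes int: "integrable lborel (char M)"
  shows "\<exists>f. (\<forall>s. 0 \<le> f s) \<and> continuous_on UNIV f \<and> bounded (range f) \<and>
    M = density lborel (\<lambda>s. ennreal (f s))"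
proof -
  define f where "f s = Re (inv_fourier (char M) s)" for s
  define B where "B = (LINT \<xi>|lborel. norm (char M \<xi>)) / (2 * pi)"
  have cont: "continuous_on UNIV f"
    unfolding f_def by (intro continuous_at_imp_continuous_on ballI continuous_Re isCont_inv_fourier int)
  have f_le: "\<bar>f s\<bar> \<le> B" for s
    unfolding f_def B_def using abs_Re_le_cmod norm_inv_fourier_le by (rule order_trans)
  have no_atoms: "measure M {c} = 0" for c
  proof (rule measure_singleton_eq_0_if_Ioc_bound)
    fix a b :: real assume ab: "a \<le> b" "measure M {a} = 0" "measure M {b} = 0"
    have "measure M {a<..b} = (LINT s|lborel. indicator {a<..<b} s * f s)"
      unfolding f_def by (rule measure_Ioc_eq_integral_inv_fourier[OF int ab])
    also have "\<dots> \<le> (LINT s|lborel. indicator {a<..<b} s * B)"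
      using f_le integrable_indicator_Ioo_continuous[OF cont] integrable_indicator_Ioo_continuous[of "\<lambda>_. B"]
      by (intro integral_mono) (auto simp: abs_le_iff split: split_indicator)
    also have "\<dots> = B * (b - a)"
      using ab(1) by simp
    finally show "measure M {a<..b} \<le> B * (b - a)" .
  qed
  have "measure M {a<..b} = (LINT s|lborel. indicator {a<..<b} s * f s)" if "a \<le> b" for a b
    unfolding f_def using that no_atoms by (intro measure_Ioc_eq_integral_inv_fourier[OF int])
  then have "(\<forall>s. 0 \<le> f s) \<and> M = density lborel (\<lambda>s. ennreal (f s))"
    by (rule density_if_measure_Ioc_eq_integral[OF cont])
  moreover have "bounded (range f)"
    unfolding bounded_iff using f_le by auto
  ultimately show ?thesis
    using cont by blast
qed

section \<open>The standard Gaussian measure on a Euclidean space\<close>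

lemma integral_lborel_prod:
  fixes g :: "'a::euclidean_space \<Rightarrow> real \<Rightarrow> 'b::{real_normed_field, banach, second_countable_topology}"
  assumes [measurable]: "\<And>b. b \<in> Basis \<Longrightarrow> g b \<in> borel_measurable borel"
    and int: "\<And>b. b \<in> Basis \<Longrightarrow> integrable lborel (g b)"
  shows "(\<integral>t. (\<Prod>b\<in>Basis. g b (t \<bullet> b)) \<partial>lborel) = (\<Prod>b\<in>Basis. \<integral>x. g b x \<partial>lborel)"
proof -
  interpret product_sigma_finite "\<lambda>_::'a. lborel :: real measure"
    by (simp add: product_sigma_finite_def lborel.sigma_finite_measure_axioms)
  have "(\<integral>t. (\<Prod>b\<in>Basis. g b (t \<bullet> b)) \<partial>lborel) =
      (\<integral>f. (\<Prod>c\<in>Basis. g c ((\<Sum>b\<in>Basis. f b *\<^sub>R b) \<bullet> c)) \<partial>(\<Pi>\<^sub>M b\<in>Basis. lborel))"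
    by (subst lborel_eq) (rule integral_distr; measurable)
  also have "\<dots> = (\<integral>f. (\<Prod>c\<in>Basis. g c (f c)) \<partial>(\<Pi>\<^sub>M b\<in>Basis. lborel))"
    by (intro Bochner_Integration.integral_cong prod.cong refl)
       (simp add: inner_sum_left inner_Basis if_distrib cong: if_cong)
  also have "\<dots> = (\<Prod>b\<in>Basis. \<integral>x. g b x \<partial>lborel)"
    by (rule product_integral_prod) (auto intro: int)
  finally show ?thesis .
qed

lemma integral_std_normal_density_iexp:
  "(CLINT x|lborel. complex_of_real (std_normal_density x) * iexp (u * x)) =
    complex_of_real (exp (- (u\<^sup>2) / 2))"
proof -
  have "char std_normal_distribution u = (CLINT x|lborel. std_normal_density x *\<^sub>R iexp (u * x))"
    unfolding char_def
    by (subst integral_density) (auto simp: normal_density_nonneg normal_density_def)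
  then show ?thesis
    by (simp add: char_std_normal_distribution scaleR_conv_of_real)
qed

lemma integrable_std_normal_density_iexp:
  "integrable lborel (\<lambda>x. complex_of_real (std_normal_density x) * iexp (u * x))"
proof (rule Bochner_Integration.integrable_bound)
  show "integrable lborel std_normal_density"
    using integrable_normal_moment[of 1 0 0] by (simp add: normal_density_def)
  show "(\<lambda>x. complex_of_real (std_normal_density x) * iexp (u * x)) \<in> borel_measurable lborel"
    unfolding normal_density_def by measurable
  show "AE x in lborel. norm (complex_of_real (std_normal_density x) * iexp (u * x)) \<le> norm (std_normal_density x)"
    by (simp only: norm_mult norm_exp_i_times norm_of_real) simp
qed

definition std_gaussian_density :: "'a::euclidean_space \<Rightarrow> real" where
  "std_gaussian_density t = (\<Prod>b\<in>Basis. std_normal_density (t \<bullet> b))"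

definition std_gaussian :: "'a::euclidean_space measure" where
  "std_gaussian = density lborel (\<lambda>t. ennreal (std_gaussian_density t))"

lemma std_gaussian_density_pos: "0 < std_gaussian_density t"
  unfolding std_gaussian_density_def by (intro prod_pos normal_density_pos) auto

lemma borel_measurable_std_gaussian_density [measurable]: "std_gaussian_density \<in> borel_measurable borel"
  unfolding std_gaussian_density_def normal_density_def by measurable

lemma
  shows sets_std_gaussian [simp, measurable_cong]: "sets std_gaussian = sets borel"
    and space_std_gaussian [simp]: "space std_gaussian = UNIV"
  by (simp_all add: std_gaussian_def)

lemma AE_std_gaussian_iff: "(AE t in std_gaussian. P t) \<longleftrightarrow> (AE t in lborel. P t)"
  unfolding std_gaussian_def by (subst AE_density) (auto simp: std_gaussian_density_pos)

lemma prob_space_std_gaussian: "prob_space (std_gaussian :: 'a::euclidean_space measure)"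
proof
  interpret N: prob_space "density lborel (\<lambda>x. ennreal (std_normal_density x))"
    by (rule prob_space_normal_density) simp
  have "emeasure (std_gaussian :: 'a measure) (space std_gaussian) =
      (\<integral>\<^sup>+t. (\<Prod>b\<in>Basis. ennreal (std_normal_density ((t :: 'a) \<bullet> b))) \<partial>lborel)"
    by (simp add: std_gaussian_def std_gaussian_density_def emeasure_density prod_ennreal normal_density_nonneg)
  also have "\<dots> = (\<Prod>b\<in>(Basis :: 'a set). \<integral>\<^sup>+x. ennreal (std_normal_density x) \<partial>lborel)"
    by (rule nn_integral_lborel_prod) (auto simp: normal_density_def)
  also have "\<dots> = 1"
    using N.emeasure_space_1 by (simp add: emeasure_density)
  finally show "emeasure (std_gaussian :: 'a measure) (space std_gaussian) = 1" .
qed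

lemma char_std_gaussian:
  "(CLINT t|std_gaussian. iexp (t \<bullet> v)) = complex_of_real (exp (- (norm v)\<^sup>2 / 2))"
proof -
  have "(CLINT t|std_gaussian. iexp (t \<bullet> v)) = (CLINT t|lborel. std_gaussian_density t *\<^sub>R iexp (t \<bullet> v))"
    unfolding std_gaussian_def by (subst integral_density) (auto simp: std_gaussian_density_pos less_imp_le)
  also have "\<dots> = (CLINT t|lborel. \<Prod>b\<in>Basis. complex_of_real (std_normal_density (t \<bullet> b)) * iexp ((v \<bullet> b) * (t \<bullet> b)))"
  proof (intro Bochner_Integration.integral_cong refl)
    fix t :: 'a
    have "iexp (t \<bullet> v) = (\<Prod>b\<in>Basis. iexp ((v \<bullet> b) * (t \<bullet> b)))"
      by (simp add: euclidean_inner[of t v] sum_distrib_left exp_sum mult_ac)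
    then show "std_gaussian_density t *\<^sub>R iexp (t \<bullet> v) =
        (\<Prod>b\<in>Basis. complex_of_real (std_normal_density (t \<bullet> b)) * iexp ((v \<bullet> b) * (t \<bullet> b)))"
      by (simp add: std_gaussian_density_def scaleR_conv_of_real prod.distrib)
  qed
  also have "\<dots> = (\<Prod>b\<in>Basis. CLINT x|lborel. complex_of_real (std_normal_density x) * iexp ((v \<bullet> b) * x))"
    by (rule integral_lborel_prod[OF _ integrable_std_normal_density_iexp]) (simp add: normal_density_def)
  also have "\<dots> = (\<Prod>b\<in>Basis. complex_of_real (exp (- (v \<bullet> b)\<^sup>2 / 2)))"
    by (intro prod.cong refl integral_std_normal_density_iexp)
  also have "\<dots> = complex_of_real (exp (\<Sum>b\<in>Basis. - (v \<bullet> b)\<^sup>2 / 2))"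
    by (simp add: exp_sum)
  also have "(\<Sum>b\<in>Basis. - (v \<bullet> b)\<^sup>2 / 2) = - (norm v)\<^sup>2 / 2"
  proof -
    have "(norm v)\<^sup>2 = (\<Sum>b\<in>Basis. (v \<bullet> b)\<^sup>2)"
      unfolding power2_norm_eq_inner by (simp add: euclidean_inner[of v v] power2_eq_square)
    then show ?thesis
      by (simp add: sum_negf sum_divide_distrib[symmetric])
  qed
  finally show ?thesis .
qed

lemma exp_neg_le_powr:
  fixes q z :: real
  assumes "q > 0" "z > 0"
  shows "exp (- z) \<le> q powr q * z powr (- q)"
proof -
  have "z / q \<le> exp (z / q)"
    using exp_ge_add_one_self[of "z / q"] by linarith
  then have "(z / q) powr q \<le> exp (z / q) powr q"
    using assms by (intro powr_mono2) auto
  also have "\<dots> = exp z"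
    using assms by (simp add: powr_def)
  finally have "z powr q \<le> q powr q * exp z"
    using assms by (simp add: powr_divide field_simps)
  then show ?thesis
    using assms by (simp add: powr_minus exp_minus field_simps)
qed

lemma exp_neg_sq_le_powr:
  fixes \<xi> c d r \<alpha> q :: real
  assumes "q > 0" "\<xi> \<noteq> 0" "c > 0" "d > 0" "c * d powr \<alpha> \<le> r"
  shows "exp (- (\<xi> * r)\<^sup>2 / 2) \<le>
    q powr q * (c\<^sup>2 / 2) powr (- q) * \<bar>\<xi>\<bar> powr (- 2 * q) * d powr (- (2 * \<alpha> * q))"
proof -
  define z where "z = (\<xi> * (c * d powr \<alpha>))\<^sup>2 / 2"
  have "(d powr \<alpha>)\<^sup>2 = d powr (2 * \<alpha>)"
    using assms by (simp add: power2_eq_square powr_add[symmetric])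
  moreover have "\<bar>\<xi>\<bar> powr 2 = \<xi>\<^sup>2"
    using assms powr_realpow[of "\<bar>\<xi>\<bar>" 2] by simp
  ultimately have z: "z = (c\<^sup>2 / 2) * \<bar>\<xi>\<bar> powr 2 * d powr (2 * \<alpha>)"
    unfolding z_def by (simp add: power_mult_distrib mult_ac)
  have "z > 0"
    unfolding z using assms by (intro mult_pos_pos) auto
  have "\<bar>\<xi> * (c * d powr \<alpha>)\<bar> \<le> \<bar>\<xi> * r\<bar>"
    using assms(3-5) by (simp add: abs_mult mult_left_mono)
  then have "exp (- (\<xi> * r)\<^sup>2 / 2) \<le> exp (- z)"
    unfolding z_def by (simp add: abs_le_square_iff)
  also have "\<dots> \<le> q powr q * z powr (- q)"
    by (rule exp_neg_le_powr[OF assms(1) \<open>z > 0\<close>])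
  also have "z powr (- q) = (c\<^sup>2 / 2) powr (- q) * \<bar>\<xi>\<bar> powr (- 2 * q) * d powr (- (2 * \<alpha> * q))"
  proof -
    have "z powr (- q) = ((c\<^sup>2 / 2) * \<bar>\<xi>\<bar> powr 2) powr (- q) * (d powr (2 * \<alpha>)) powr (- q)"
      unfolding z by (rule powr_mult; simp)
    also have "((c\<^sup>2 / 2) * \<bar>\<xi>\<bar> powr 2) powr (- q) = (c\<^sup>2 / 2) powr (- q) * (\<bar>\<xi>\<bar> powr 2) powr (- q)"
      by (rule powr_mult; simp)
    finally show ?thesis
      by (simp only: powr_powr) (simp add: mult_ac)
  qed
  finally show ?thesis
    by (simp add: mult_ac)
qed

lemma nn_integral_add_reflect:
  fixes f :: "real \<Rightarrow> ennreal"
  assumes [measurable]: "f \<in> borel_measurable borel"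
  shows "(\<integral>\<^sup>+u. f u + f (- u) \<partial>lborel) = 2 * (\<integral>\<^sup>+u. f u \<partial>lborel)"
  using nn_integral_real_affine[of f "-1" 0] by (simp add: nn_integral_add mult_2)

lemma nn_integral_abs_powr_Icc_finite:
  fixes p r :: real
  assumes "p < 1" "0 \<le> r"
  shows "(\<integral>\<^sup>+u. indicator {-r..r} u * ennreal (\<bar>u\<bar> powr (- p)) \<partial>lborel) < \<infinity>"
proof -
  define g where "g u = indicator {0..r} u * ennreal (u powr (- p))" for u :: real
  have g_meas [measurable]: "g \<in> borel_measurable borel"
    unfolding g_def by measurable
  have "(\<integral>\<^sup>+u. ennreal (indicator {0..r} u * u powr (- p)) \<partial>lborel) = ennreal (r powr (1 - p) / (1 - p))"
    using has_integral_powr_from_0[of "- p" r] assms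
    by (intro nn_integral_has_integral_lebesgue) (auto simp: add.commute)
  moreover have "(\<integral>\<^sup>+u. g u \<partial>lborel) = (\<integral>\<^sup>+u. ennreal (indicator {0..r} u * u powr (- p)) \<partial>lborel)"
    unfolding g_def by (intro nn_integral_cong) (simp split: split_indicator)
  ultimately have g_finite: "(\<integral>\<^sup>+u. g u \<partial>lborel) < \<infinity>"
    by simp
  have "(\<integral>\<^sup>+u. indicator {-r..r} u * ennreal (\<bar>u\<bar> powr (- p)) \<partial>lborel) \<le> (\<integral>\<^sup>+u. g u + g (- u) \<partial>lborel)"
    unfolding g_def by (intro nn_integral_mono) (auto split: split_indicator)
  also have "\<dots> < \<infinity>"
    unfolding nn_integral_add_reflect[OF g_meas] using g_finite by (simp add: ennreal_mult_less_top)
  finally show ?thesis .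
qed

lemma nn_integral_powr_tail_finite:
  fixes q :: real
  assumes "q > 1"
  shows "(\<integral>\<^sup>+\<xi>. ennreal (if \<bar>\<xi>\<bar> \<le> 1 then 1 else \<bar>\<xi>\<bar> powr (- q)) \<partial>lborel) < \<infinity>"
proof -
  define g where "g u = indicator {1..} u * ennreal (u powr (- q))" for u :: real
  have g_meas [measurable]: "g \<in> borel_measurable borel"
    unfolding g_def by measurable
  have "(\<integral>\<^sup>+u. ennreal (indicator {1..} u * u powr (- q)) \<partial>lborel) = ennreal (- (1 powr (1 - q)) / (1 - q))"
    using has_integral_powr_to_inf[of "- q" 1] assms
    by (intro nn_integral_has_integral_lebesgue) (auto simp: add.commute)
  moreover have "(\<integral>\<^sup>+u. g u \<partial>lborel) = (\<integral>\<^sup>+u. ennreal (indicator {1..} u * u powr (- q)) \<partial>lborel)"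
    unfolding g_def by (intro nn_integral_cong) (simp split: split_indicator)
  ultimately have g_finite: "(\<integral>\<^sup>+u. g u \<partial>lborel) < \<infinity>"
    by simp
  have "(\<integral>\<^sup>+\<xi>. ennreal (if \<bar>\<xi>\<bar> \<le> 1 then 1 else \<bar>\<xi>\<bar> powr (- q)) \<partial>lborel) \<le>
      (\<integral>\<^sup>+\<xi>. indicator {-1..1} \<xi> + (g \<xi> + g (- \<xi>)) \<partial>lborel)"
    unfolding g_def by (intro nn_integral_mono) (auto split: split_indicator)
  also have "\<dots> = emeasure lborel {-1..1::real} + (\<integral>\<^sup>+\<xi>. g \<xi> + g (- \<xi>) \<partial>lborel)"
    by (subst nn_integral_add) auto
  also have "\<dots> = emeasure lborel {-1..1::real} + 2 * (\<integral>\<^sup>+u. g u \<partial>lborel)"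
    unfolding nn_integral_add_reflect[OF g_meas] ..
  also have "\<dots> < \<infinity>"
    using g_finite by (simp add: ennreal_mult_less_top)
  finally show ?thesis .
qed

section \<open>Singular integrals on the circle\<close>

lemma dist_S1_cases:
  assumes "x \<in> {0..<1}" "y \<in> {0..<1}"
  shows "dist_S1 x y = \<bar>y - x\<bar> \<or> dist_S1 x y = \<bar>y - (x - 1)\<bar> \<or> dist_S1 x y = \<bar>y - (x + 1)\<bar>"
proof (cases "y \<le> x")
  case True
  then have "frac (x - y) = x - y"
    using assms by (subst frac_eq) auto
  then show ?thesis
    unfolding dist_S1_def using True assms by (auto simp: min_def)
next
  case False
  then have "\<lfloor>x - y\<rfloor> = -1"
    using assms by (subst floor_eq_iff) auto
  then have "frac (x - y) = x - y + 1"
    by (simp add: frac_def)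
  then show ?thesis
    unfolding dist_S1_def using False assms by (auto simp: min_def)
qed

lemma dist_S1_pos:
  assumes "x \<in> {0..<1}" "y \<in> {0..<1}" "x \<noteq> y"
  shows "0 < dist_S1 x y"
  using dist_S1_cases[OF assms(1,2)] assms by auto

lemma borel_measurable_dist_S1 [measurable]:
  "(\<lambda>(x, y). dist_S1 x y) \<in> borel_measurable (borel \<Otimes>\<^sub>M borel)"
  unfolding dist_S1_def frac_def by measurable

text \<open>Lebesgue measure on \<open>[0,1)\<close> as in the statement, but on the Borel sets, where product
  measures and the \<open>measurable\<close> method are at home.\<close>

abbreviation unif_01 :: "real measure" where
  "unif_01 \<equiv> uniform_measure lborel {0..<1}"

lemma prob_space_unif_01: "prob_space unif_01"
  by (rule prob_space_uniform_measure) simp_all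

lemma nn_integral_unif_01:
  "f \<in> borel_measurable borel \<Longrightarrow> (\<integral>\<^sup>+x. f x \<partial>unif_01) = (\<integral>\<^sup>+x. f x * indicator {0..<1} x \<partial>lborel)"
  by (simp add: nn_integral_uniform_measure divide_ennreal_def)

lemma AE_unif_01_neq: "AE y in unif_01. y \<in> {0..<1} \<and> y \<noteq> x"
  using AE_lborel_singleton[of x] by (intro AE_uniform_measureI) (auto elim!: eventually_mono)

lemma distr_lebesgue_on_eq_unif_01:
  fixes F :: "real \<Rightarrow> real"
  assumes [measurable]: "F \<in> borel_measurable borel"
  shows "distr (lebesgue_on {0..<1}) lborel F = distr unif_01 lborel F"
proof (rule measure_eqI)
  fix A assume "A \<in> sets (distr (lebesgue_on {0..<1}) lborel F)"
  then have [measurable]: "A \<in> sets borel" by simp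
  have "F \<in> lebesgue_on {0..<1} \<rightarrow>\<^sub>M lborel"
    using measurable_restrict_space1[OF measurable_completion[of F lborel borel]] by simp
  then have "emeasure (distr (lebesgue_on {0..<1}) lborel F) A = emeasure (lebesgue_on {0..<1}) (F -` A \<inter> {0..<1})"
    by (subst emeasure_distr) auto
  also have "\<dots> = emeasure lborel (F -` A \<inter> {0..<1})"
    by (subst emeasure_restrict_space) (auto simp: emeasure_completion main_part_sets)
  also have "\<dots> = emeasure unif_01 (F -` A)"
    using measurable_sets_borel[OF assms \<open>A \<in> sets borel\<close>] by (simp add: Int_commute divide_ennreal_def)
  also have "\<dots> = emeasure (distr unif_01 lborel F) A"
    by (subst emeasure_distr) auto
  finally show "emeasure (distr (lebesgue_on {0..<1}) lborel F) A = emeasure (distr unif_01 lborel F) A" .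
qed simp

lemma dist_S1_powr_le:
  assumes "x \<in> {0..<1}" "y \<in> {0..<1}"
  shows "ennreal (dist_S1 x y powr (- p)) \<le> ennreal (\<bar>y - x\<bar> powr (- p)) +
    ennreal (\<bar>y - (x - 1)\<bar> powr (- p)) + ennreal (\<bar>y - (x + 1)\<bar> powr (- p))"
  using dist_S1_cases[OF assms] by (elim disjE) (simp_all add: add_increasing add_increasing2)

lemma nn_integral_unif_01_abs_powr_le:
  assumes "c \<in> {-1..2}"
  shows "(\<integral>\<^sup>+y. ennreal (\<bar>y - c\<bar> powr (- p)) \<partial>unif_01) \<le>
    (\<integral>\<^sup>+u. indicator {-2..2} u * ennreal (\<bar>u\<bar> powr (- p)) \<partial>lborel)"
proof -
  have "(\<integral>\<^sup>+y. ennreal (\<bar>y - c\<bar> powr (- p)) \<partial>unif_01) =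
      (\<integral>\<^sup>+y. ennreal (\<bar>y - c\<bar> powr (- p)) * indicator {0..<1} y \<partial>lborel)"
    by (rule nn_integral_unif_01) simp
  also have "\<dots> \<le> (\<integral>\<^sup>+y. indicator {-2..2} (y - c) * ennreal (\<bar>y - c\<bar> powr (- p)) \<partial>lborel)"
    using assms by (intro nn_integral_mono) (auto split: split_indicator)
  also have "\<dots> = (\<integral>\<^sup>+u. indicator {-2..2} u * ennreal (\<bar>u\<bar> powr (- p)) \<partial>lborel)"
    using nn_integral_real_affine[of "\<lambda>u. indicator {-2..2} u * ennreal (\<bar>u\<bar> powr (- p))" 1 "- c"]
    by simp
  finally show ?thesis .
qed

lemma nn_integral_dist_S1_powr_finite:
  fixes p :: real
  assumes "p < 1"
  shows "(\<integral>\<^sup>+z. ennreal (dist_S1 (fst z) (snd z) powr (- p)) \<partial>(unif_01 \<Otimes>\<^sub>M unif_01)) < \<infinity>"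
proof -
  interpret U: prob_space unif_01 by (rule prob_space_unif_01)
  define J where "J = (\<integral>\<^sup>+u. indicator {-2..2} u * ennreal (\<bar>u\<bar> powr (- p)) \<partial>lborel)"
  have J: "J < \<infinity>"
    unfolding J_def using assms by (intro nn_integral_abs_powr_Icc_finite) auto
  have inner: "(\<integral>\<^sup>+y. ennreal (dist_S1 x y powr (- p)) \<partial>unif_01) \<le> J + J + J" if x: "x \<in> {0..<1}" for x
  proof -
    have "(\<integral>\<^sup>+y. ennreal (dist_S1 x y powr (- p)) \<partial>unif_01) \<le>
        (\<integral>\<^sup>+y. ennreal (\<bar>y - x\<bar> powr (- p)) + ennreal (\<bar>y - (x - 1)\<bar> powr (- p)) +
          ennreal (\<bar>y - (x + 1)\<bar> powr (- p)) \<partial>unif_01)"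
      by (intro nn_integral_mono_AE AE_uniform_measureI AE_I2 impI dist_S1_powr_le x) auto
    also have "\<dots> = (\<integral>\<^sup>+y. ennreal (\<bar>y - x\<bar> powr (- p)) \<partial>unif_01) +
        (\<integral>\<^sup>+y. ennreal (\<bar>y - (x - 1)\<bar> powr (- p)) \<partial>unif_01) +
        (\<integral>\<^sup>+y. ennreal (\<bar>y - (x + 1)\<bar> powr (- p)) \<partial>unif_01)"
      by (simp add: nn_integral_add)
    also have "\<dots> \<le> J + J + J"
      unfolding J_def using x by (intro add_mono nn_integral_unif_01_abs_powr_le) auto
    finally show ?thesis .
  qed
  have "(\<integral>\<^sup>+z. ennreal (dist_S1 (fst z) (snd z) powr (- p)) \<partial>(unif_01 \<Otimes>\<^sub>M unif_01)) =
      (\<integral>\<^sup>+x. (\<integral>\<^sup>+y. ennreal (dist_S1 x y powr (- p)) \<partial>unif_01) \<partial>unif_01)"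
    by (subst U.nn_integral_fst[symmetric]) (auto simp: split_beta')
  also have "\<dots> \<le> (\<integral>\<^sup>+x. J + J + J \<partial>unif_01)"
    by (intro nn_integral_mono_AE AE_uniform_measureI AE_I2 impI inner) auto
  also have "\<dots> < \<infinity>"
    using J U.emeasure_space_1 by (simp add: ennreal_mult_less_top)
  finally show ?thesis .
qed

lemma nn_integral_unif_01_pair_mono:
  fixes f g :: "real \<times> real \<Rightarrow> ennreal"
  assumes [measurable]: "f \<in> borel_measurable (borel \<Otimes>\<^sub>M borel)" "g \<in> borel_measurable (borel \<Otimes>\<^sub>M borel)"
    and le: "\<And>x y. x \<in> {0..<1} \<Longrightarrow> y \<in> {0..<1} \<Longrightarrow> x \<noteq> y \<Longrightarrow> f (x, y) \<le> g (x, y)"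
  shows "(\<integral>\<^sup>+z. f z \<partial>(unif_01 \<Otimes>\<^sub>M unif_01)) \<le> (\<integral>\<^sup>+z. g z \<partial>(unif_01 \<Otimes>\<^sub>M unif_01))"
proof -
  interpret U: prob_space unif_01 by (rule prob_space_unif_01)
  have "(\<integral>\<^sup>+x. \<integral>\<^sup>+y. f (x, y) \<partial>unif_01 \<partial>unif_01) \<le> (\<integral>\<^sup>+x. \<integral>\<^sup>+y. g (x, y) \<partial>unif_01 \<partial>unif_01)"
  proof (rule nn_integral_mono_AE)
    show "AE x in unif_01. (\<integral>\<^sup>+y. f (x, y) \<partial>unif_01) \<le> (\<integral>\<^sup>+y. g (x, y) \<partial>unif_01)"
      using AE_unif_01_neq[of 0]
    proof eventually_elim
      case (elim x)
      show ?case
      proof (rule nn_integral_mono_AE)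
        show "AE y in unif_01. f (x, y) \<le> g (x, y)"
          using AE_unif_01_neq[of x] by eventually_elim (use elim in \<open>auto intro: le\<close>)
      qed
    qed
  qed
  then show ?thesis
    by (simp add: U.nn_integral_fst)
qed

lemma integral_exp_neg_sq_norm_diff_le_powr:
  fixes \<Phi> :: "real \<Rightarrow> 'a::euclidean_space" and c \<alpha> q :: real
  assumes [measurable]: "\<Phi> \<in> borel_measurable borel"
    and "c > 0" "q > 0" "2 * \<alpha> * q < 1"
    and lower: "\<And>x y. c * dist_S1 x y powr \<alpha> \<le> norm (\<Phi> x - \<Phi> y)"
  shows "\<exists>C. \<forall>\<xi>. \<xi> \<noteq> 0 \<longrightarrow>
    (\<integral>z. exp (- (\<xi> * norm (\<Phi> (fst z) - \<Phi> (snd z)))\<^sup>2 / 2) \<partial>(unif_01 \<Otimes>\<^sub>M unif_01)) \<le> C * \<bar>\<xi>\<bar> powr (- 2 * q)"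
proof -
  interpret U: prob_space unif_01 by (rule prob_space_unif_01)
  interpret UU: pair_prob_space unif_01 unif_01 ..
  define I where "I = (\<integral>\<^sup>+z. ennreal (dist_S1 (fst z) (snd z) powr (- (2 * \<alpha> * q))) \<partial>(unif_01 \<Otimes>\<^sub>M unif_01))"
  have I: "I < \<infinity>"
    unfolding I_def using assms(4) by (intro nn_integral_dist_S1_powr_finite) simp
  define C0 where "C0 = q powr q * (c\<^sup>2 / 2) powr (- q)"
  have "(\<integral>z. exp (- (\<xi> * norm (\<Phi> (fst z) - \<Phi> (snd z)))\<^sup>2 / 2) \<partial>(unif_01 \<Otimes>\<^sub>M unif_01)) \<le>
      (C0 * enn2real I) * \<bar>\<xi>\<bar> powr (- 2 * q)" if "\<xi> \<noteq> 0" for \<xi>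
  proof -
    define k where "k z = exp (- (\<xi> * norm (\<Phi> (fst z) - \<Phi> (snd z)))\<^sup>2 / 2)" for z :: "real \<times> real"
    have [measurable]: "k \<in> borel_measurable (borel \<Otimes>\<^sub>M borel)"
      unfolding k_def by measurable
    have k_bounds: "0 \<le> k z" "k z \<le> 1" for z
      by (simp_all add: k_def)
    have "integrable (unif_01 \<Otimes>\<^sub>M unif_01) k"
      by (rule UU.integrable_const_bound[where B=1]) (simp_all add: k_bounds)
    then have "ennreal (\<integral>z. k z \<partial>(unif_01 \<Otimes>\<^sub>M unif_01)) = (\<integral>\<^sup>+z. ennreal (k z) \<partial>(unif_01 \<Otimes>\<^sub>M unif_01))"
      by (rule nn_integral_eq_integral[symmetric]) (simp add: k_bounds)
    also have "\<dots> \<le> (\<integral>\<^sup>+z. ennreal (C0 * \<bar>\<xi>\<bar> powr (- 2 * q)) *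
        ennreal (dist_S1 (fst z) (snd z) powr (- (2 * \<alpha> * q))) \<partial>(unif_01 \<Otimes>\<^sub>M unif_01))"
    proof (rule nn_integral_unif_01_pair_mono)
      fix x y :: real assume "x \<in> {0..<1}" "y \<in> {0..<1}" "x \<noteq> y"
      then have d_pos: "0 < dist_S1 x y"
        by (rule dist_S1_pos)
      have "k (x, y) \<le> C0 * \<bar>\<xi>\<bar> powr (- 2 * q) * dist_S1 x y powr (- (2 * \<alpha> * q))"
        using exp_neg_sq_le_powr[OF assms(3) that assms(2) d_pos lower] by (simp add: k_def C0_def mult_ac)
      then show "ennreal (k (x, y)) \<le> ennreal (C0 * \<bar>\<xi>\<bar> powr (- 2 * q)) *
          ennreal (dist_S1 (fst (x, y)) (snd (x, y)) powr (- (2 * \<alpha> * q)))"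
        by (subst ennreal_mult[symmetric]) (auto simp: C0_def intro: ennreal_leI)
    qed simp_all
    also have "\<dots> = ennreal (C0 * \<bar>\<xi>\<bar> powr (- 2 * q)) * I"
      unfolding I_def by (rule nn_integral_cmult) simp
    also have "\<dots> = ennreal ((C0 * enn2real I) * \<bar>\<xi>\<bar> powr (- 2 * q))"
      using I by (simp add: C0_def ennreal_mult less_top mult_ac)
    finally show ?thesis
      unfolding k_def by (subst (asm) ennreal_le_iff) (auto simp: C0_def)
  qed
  then show ?thesis
    by blast
qed

section \<open>Gaussian averages of characteristic functions\<close>

lemma (in prob_space) norm_integral_iexp_squared:
  assumes [measurable]: "g \<in> borel_measurable M"
  shows "(norm (CLINT x|M. iexp (g x)))\<^sup>2 = Re (CLINT z|M \<Otimes>\<^sub>M M. iexp (g (fst z) - g (snd z)))"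
proof -
  interpret MM: pair_prob_space M M ..
  have "integrable (M \<Otimes>\<^sub>M M) (\<lambda>z. iexp (g (fst z) - g (snd z)))"
    by (rule MM.integrable_const_bound[where B=1]) (simp_all add: norm_exp_i_times del: of_real_diff)
  then have "(CLINT z|M \<Otimes>\<^sub>M M. iexp (g (fst z) - g (snd z))) =
      (CLINT x|M. CLINT y|M. iexp (g x - g y))"
    by (subst MM.integral_fst'[symmetric]) simp_all
  also have "\<dots> = (CLINT x|M. CLINT y|M. iexp (g x) * cnj (iexp (g y)))"
    unfolding diff_conv_add_uminus of_real_add distrib_left exp_add by (simp add: exp_cnj)
  also have "\<dots> = (CLINT x|M. iexp (g x)) * cnj (CLINT x|M. iexp (g x))"
    by simp
  also have "\<dots> = complex_of_real ((norm (CLINT x|M. iexp (g x)))\<^sup>2)"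
    by (rule complex_norm_square[symmetric])
  finally show ?thesis
    by simp
qed

lemma integral_std_gaussian_iexp_diff:
  fixes u v :: "'a::euclidean_space"
  shows "(CLINT t|std_gaussian. iexp (\<xi> * (a + t \<bullet> u) - \<xi> * (b + t \<bullet> v))) =
    iexp (\<xi> * (a - b)) * complex_of_real (exp (- (\<xi> * norm (u - v))\<^sup>2 / 2))"
proof -
  have "iexp (\<xi> * (a + t \<bullet> u) - \<xi> * (b + t \<bullet> v)) = iexp (\<xi> * (a - b)) * iexp (t \<bullet> (\<xi> *\<^sub>R (u - v)))" for t
    by (simp add: exp_add[symmetric] inner_diff_right algebra_simps)
  then have "(CLINT t|std_gaussian. iexp (\<xi> * (a + t \<bullet> u) - \<xi> * (b + t \<bullet> v))) =
      iexp (\<xi> * (a - b)) * (CLINT t|std_gaussian. iexp (t \<bullet> (\<xi> *\<^sub>R (u - v))))"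
    by simp
  also have "\<dots> = iexp (\<xi> * (a - b)) * complex_of_real (exp (- (\<xi> * norm (u - v))\<^sup>2 / 2))"
    unfolding char_std_gaussian by (simp add: power_mult_distrib)
  finally show ?thesis .
qed

lemma (in prob_space) integral_std_gaussian_norm_char_squared:
  fixes W :: "'a \<Rightarrow> real" and \<Phi> :: "'a \<Rightarrow> 'c::euclidean_space"
  assumes [measurable]: "W \<in> borel_measurable M" "\<Phi> \<in> borel_measurable M"
  shows "(\<integral>t. (norm (CLINT x|M. iexp (\<xi> * (W x + t \<bullet> \<Phi> x))))\<^sup>2 \<partial>std_gaussian) =
    Re (CLINT z|M \<Otimes>\<^sub>M M. iexp (\<xi> * (W (fst z) - W (snd z))) *
      complex_of_real (exp (- (\<xi> * norm (\<Phi> (fst z) - \<Phi> (snd z)))\<^sup>2 / 2)))"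
proof -
  interpret G: prob_space "std_gaussian :: 'c measure"
    by (rule prob_space_std_gaussian)
  interpret MM: pair_prob_space M M ..
  interpret GMM: pair_prob_space "std_gaussian :: 'c measure" "M \<Otimes>\<^sub>M M" ..
  define h where "h t z = iexp (\<xi> * (W (fst z) + t \<bullet> \<Phi> (fst z)) - \<xi> * (W (snd z) + t \<bullet> \<Phi> (snd z)))"
    for t :: 'c and z :: "'a \<times> 'a"
  have [measurable]: "case_prod h \<in> borel_measurable (std_gaussian \<Otimes>\<^sub>M (M \<Otimes>\<^sub>M M))"
    unfolding h_def by measurable
  have norm_h [simp]: "norm (h t z) = 1" for t z
    unfolding h_def by (simp only: norm_exp_i_times)
  have int_int_h: "integrable std_gaussian (\<lambda>t. CLINT z|M \<Otimes>\<^sub>M M. h t z)"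
  proof (rule G.integrable_const_bound[where B=1])
    show "AE t in std_gaussian. norm (CLINT z|M \<Otimes>\<^sub>M M. h t z) \<le> 1"
      using integral_norm_bound[of "M \<Otimes>\<^sub>M M" "h _"] by (simp add: MM.prob_space)
  qed simp
  have int_h: "integrable (std_gaussian \<Otimes>\<^sub>M (M \<Otimes>\<^sub>M M)) (case_prod h)"
  proof (rule GMM.integrable_const_bound[where B=1])
    show "AE x in std_gaussian \<Otimes>\<^sub>M (M \<Otimes>\<^sub>M M). norm (case_prod h x) \<le> 1"
      by (simp add: split_beta')
  qed simp
  have "(\<integral>t. (norm (CLINT x|M. iexp (\<xi> * (W x + t \<bullet> \<Phi> x))))\<^sup>2 \<partial>std_gaussian) =
      (\<integral>t. Re (CLINT z|M \<Otimes>\<^sub>M M. h t z) \<partial>std_gaussian)"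
    unfolding h_def by (subst norm_integral_iexp_squared) simp_all
  also have "\<dots> = Re (CLINT t|std_gaussian. CLINT z|M \<Otimes>\<^sub>M M. h t z)"
    by (rule integral_bounded_linear[OF bounded_linear_Re int_int_h])
  also have "(CLINT t|std_gaussian. CLINT z|M \<Otimes>\<^sub>M M. h t z) = (CLINT z|M \<Otimes>\<^sub>M M. CLINT t|std_gaussian. h t z)"
    by (rule GMM.Fubini_integral[OF int_h, symmetric])
  finally show ?thesis
    unfolding h_def integral_std_gaussian_iexp_diff .
qed

lemma (in prob_space) norm_integral_iexp_le_1: "norm (CLINT x|M. iexp (f x)) \<le> 1"
  using integral_norm_bound[of M "\<lambda>x. iexp (f x)"] by (simp add: prob_space norm_exp_i_times)

lemma (in prob_space) integral_std_gaussian_norm_char_le: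
  fixes W :: "'a \<Rightarrow> real" and \<Phi> :: "'a \<Rightarrow> 'c::euclidean_space"
  assumes [measurable]: "W \<in> borel_measurable M" "\<Phi> \<in> borel_measurable M"
  shows "(\<integral>t. norm (CLINT x|M. iexp (\<xi> * (W x + t \<bullet> \<Phi> x))) \<partial>std_gaussian)\<^sup>2 \<le>
    (\<integral>z. exp (- (\<xi> * norm (\<Phi> (fst z) - \<Phi> (snd z)))\<^sup>2 / 2) \<partial>(M \<Otimes>\<^sub>M M))"
proof -
  interpret G: prob_space "std_gaussian :: 'c measure"
    by (rule prob_space_std_gaussian)
  interpret MM: pair_prob_space M M ..
  define \<phi> where "\<phi> t = norm (CLINT x|M. iexp (\<xi> * (W x + t \<bullet> \<Phi> x)))" for t :: 'c
  have [measurable]: "\<phi> \<in> borel_measurable std_gaussian"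
    unfolding \<phi>_def by measurable
  have "\<phi> t \<le> 1" for t
    unfolding \<phi>_def by (rule norm_integral_iexp_le_1)
  then have int: "integrable std_gaussian \<phi>" "integrable std_gaussian (\<lambda>t. (\<phi> t)\<^sup>2)"
    by (auto intro!: G.integrable_const_bound[where B=1] simp: \<phi>_def abs_square_le_1)
  define k where "k z = iexp (\<xi> * (W (fst z) - W (snd z))) *
    complex_of_real (exp (- (\<xi> * norm (\<Phi> (fst z) - \<Phi> (snd z)))\<^sup>2 / 2))" for z
  have [measurable]: "k \<in> borel_measurable (M \<Otimes>\<^sub>M M)"
    unfolding k_def by measurable
  have norm_k: "norm (k z) = exp (- (\<xi> * norm (\<Phi> (fst z) - \<Phi> (snd z)))\<^sup>2 / 2)" for z
    unfolding k_def norm_mult norm_exp_i_times by simp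
  have "(\<integral>t. \<phi> t \<partial>std_gaussian)\<^sup>2 \<le> (\<integral>t. (\<phi> t)\<^sup>2 \<partial>std_gaussian)"
    using G.variance_eq[OF int] G.variance_positive[of \<phi>] by simp
  also have "\<dots> = Re (CLINT z|M \<Otimes>\<^sub>M M. k z)"
    unfolding \<phi>_def k_def by (rule integral_std_gaussian_norm_char_squared) simp_all
  also have "\<dots> \<le> norm (CLINT z|M \<Otimes>\<^sub>M M. k z)"
    by (rule complex_Re_le_cmod)
  also have "\<dots> \<le> (\<integral>z. norm (k z) \<partial>(M \<Otimes>\<^sub>M M))"
    by (rule integral_norm_bound)
  finally show ?thesis
    unfolding \<phi>_def norm_k .
qed

lemma (in prob_space) nn_integral_std_gaussian_norm_char:
  fixes W :: "'a \<Rightarrow> real" and \<Phi> :: "'a \<Rightarrow> 'c::euclidean_space"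
  assumes [measurable]: "W \<in> borel_measurable M" "\<Phi> \<in> borel_measurable M"
  shows "(\<integral>\<^sup>+t. norm (CLINT x|M. iexp (\<xi> * (W x + t \<bullet> \<Phi> x))) \<partial>std_gaussian) =
    ennreal (\<integral>t. norm (CLINT x|M. iexp (\<xi> * (W x + t \<bullet> \<Phi> x))) \<partial>std_gaussian)"
proof -
  interpret G: prob_space "std_gaussian :: 'c measure"
    by (rule prob_space_std_gaussian)
  define \<phi> where "\<phi> t = norm (CLINT x|M. iexp (\<xi> * (W x + t \<bullet> \<Phi> x)))" for t :: 'c
  have [measurable]: "\<phi> \<in> borel_measurable std_gaussian"
    unfolding \<phi>_def by measurable
  have "0 \<le> \<phi> t" "\<phi> t \<le> 1" for t
    unfolding \<phi>_def by (simp_all only: norm_ge_zero norm_integral_iexp_le_1)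
  then have "(\<integral>\<^sup>+t. \<phi> t \<partial>std_gaussian) = ennreal (\<integral>t. \<phi> t \<partial>std_gaussian)"
    by (intro nn_integral_eq_integral G.integrable_const_bound[where B=1] AE_I2) simp_all
  then show ?thesis
    unfolding \<phi>_def .
qed

lemma integral_std_gaussian_norm_char_decay:
  fixes W :: "real \<Rightarrow> real" and \<Phi> :: "real \<Rightarrow> 'a::euclidean_space" and \<alpha> c :: real
  assumes [measurable]: "W \<in> borel_measurable borel" "\<Phi> \<in> borel_measurable borel"
    and \<alpha>: "0 < \<alpha>" "\<alpha> < 1/2" and "0 < c"
    and "\<And>x y. c * dist_S1 x y powr \<alpha> \<le> norm (\<Phi> x - \<Phi> y)"
  shows "\<exists>q>1. \<exists>D>0. \<forall>\<xi>. (\<integral>t. norm (CLINT x|unif_01. iexp (\<xi> * (W x + t \<bullet> \<Phi> x))) \<partial>std_gaussian) \<le>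
    D * (if \<bar>\<xi>\<bar> \<le> 1 then 1 else \<bar>\<xi>\<bar> powr (- q))"
proof -
  interpret U: prob_space unif_01 by (rule prob_space_unif_01)
  interpret UU: pair_prob_space unif_01 unif_01 ..
  \<comment> \<open>\<open>2 \<alpha> q = \<alpha> + 1/2 < 1\<close>, and \<open>q > 1\<close> is exactly \<open>\<alpha> < 1/2\<close>.\<close>
  define q where "q = (2 * \<alpha> + 1) / (4 * \<alpha>)"
  have q: "1 < q" "2 * \<alpha> * q < 1"
    using \<alpha> by (simp_all add: q_def field_simps)
  obtain C where C: "\<And>\<xi>. \<xi> \<noteq> 0 \<Longrightarrow>
      (\<integral>z. exp (- (\<xi> * norm (\<Phi> (fst z) - \<Phi> (snd z)))\<^sup>2 / 2) \<partial>(unif_01 \<Otimes>\<^sub>M unif_01)) \<le> C * \<bar>\<xi>\<bar> powr (- 2 * q)"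
    using integral_exp_neg_sq_norm_diff_le_powr[OF _ \<open>0 < c\<close> _ q(2) assms(6)] q(1) by force
  define D where "D = max 1 (sqrt C)"
  have "(\<integral>t. norm (CLINT x|unif_01. iexp (\<xi> * (W x + t \<bullet> \<Phi> x))) \<partial>std_gaussian) \<le>
      D * (if \<bar>\<xi>\<bar> \<le> 1 then 1 else \<bar>\<xi>\<bar> powr (- q))" for \<xi>
  proof -
    define K where "K = (\<integral>z. exp (- (\<xi> * norm (\<Phi> (fst z) - \<Phi> (snd z)))\<^sup>2 / 2) \<partial>(unif_01 \<Otimes>\<^sub>M unif_01))"
    have "(\<integral>t. norm (CLINT x|unif_01. iexp (\<xi> * (W x + t \<bullet> \<Phi> x))) \<partial>std_gaussian)\<^sup>2 \<le> K"
      unfolding K_def by (rule U.integral_std_gaussian_norm_char_le) simp_all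
    then have "(\<integral>t. norm (CLINT x|unif_01. iexp (\<xi> * (W x + t \<bullet> \<Phi> x))) \<partial>std_gaussian) \<le> sqrt K"
      by (simp add: real_le_rsqrt)
    also have "sqrt K \<le> D * (if \<bar>\<xi>\<bar> \<le> 1 then 1 else \<bar>\<xi>\<bar> powr (- q))"
    proof (cases "\<bar>\<xi>\<bar> \<le> 1")
      case True
      have "K \<le> 1"
        unfolding K_def by (intro UU.integral_le_const UU.integrable_const_bound[where B=1] AE_I2) simp_all
      then show ?thesis
        using True by (simp add: D_def le_max_iff_disj)
    next
      case False
      then have "sqrt K \<le> sqrt (C * \<bar>\<xi>\<bar> powr (- 2 * q))"
        using C[of \<xi>] by (simp add: K_def)
      also have "\<dots> = sqrt C * \<bar>\<xi>\<bar> powr (- q)"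
        by (simp add: real_sqrt_mult powr_half_sqrt[symmetric] powr_powr)
      also have "\<dots> \<le> D * \<bar>\<xi>\<bar> powr (- q)"
        unfolding D_def by (intro mult_right_mono) auto
      finally show ?thesis
        using False by simp
    qed
    finally show ?thesis .
  qed
  moreover have "D > 0"
    by (simp add: D_def)
  ultimately show ?thesis
    using q(1) by blast
qed

lemma AE_integrable_char_occupation:
  fixes W :: "real \<Rightarrow> real" and \<Phi> :: "real \<Rightarrow> 'a::euclidean_space" and \<alpha> c :: real
  assumes [measurable]: "W \<in> borel_measurable borel" "\<Phi> \<in> borel_measurable borel"
    and "0 < \<alpha>" "\<alpha> < 1/2" "0 < c"
    and "\<And>x y. c * dist_S1 x y powr \<alpha> \<le> norm (\<Phi> x - \<Phi> y)"
  shows "AE t in lborel. integrable lborel (\<lambda>\<xi>. CLINT x|unif_01. iexp (\<xi> * (W x + t \<bullet> \<Phi> x)))"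
proof -
  interpret U: prob_space unif_01 by (rule prob_space_unif_01)
  interpret G: prob_space "std_gaussian :: 'a measure" by (rule prob_space_std_gaussian)
  define \<phi> where "\<phi> t \<xi> = (CLINT x|unif_01. iexp (\<xi> * (W x + t \<bullet> \<Phi> x)))" for t :: 'a and \<xi> :: real
  have [measurable]: "(\<lambda>(t, \<xi>). \<phi> t \<xi>) \<in> borel_measurable (borel \<Otimes>\<^sub>M borel)"
    unfolding \<phi>_def by measurable
  obtain q D where q: "1 < q" and D_pos: "0 < D" and decay: "\<And>\<xi>. (\<integral>t. norm (\<phi> t \<xi>) \<partial>std_gaussian) \<le>
      D * (if \<bar>\<xi>\<bar> \<le> 1 then 1 else \<bar>\<xi>\<bar> powr (- q))"
    using integral_std_gaussian_norm_char_decay[OF assms] unfolding \<phi>_def by blast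
  have D: "(\<integral>\<^sup>+t. norm (\<phi> t \<xi>) \<partial>std_gaussian) \<le> ennreal (D * (if \<bar>\<xi>\<bar> \<le> 1 then 1 else \<bar>\<xi>\<bar> powr (- q)))" for \<xi>
  proof -
    have "(\<integral>\<^sup>+t. norm (\<phi> t \<xi>) \<partial>std_gaussian) = ennreal (\<integral>t. norm (\<phi> t \<xi>) \<partial>std_gaussian)"
      unfolding \<phi>_def by (rule U.nn_integral_std_gaussian_norm_char) simp_all
    then show ?thesis
      using decay[of \<xi>] by (simp add: ennreal_leI)
  qed
  interpret GL: pair_sigma_finite "std_gaussian :: 'a measure" lborel ..
  have "(\<integral>\<^sup>+t. (\<integral>\<^sup>+\<xi>. norm (\<phi> t \<xi>) \<partial>lborel) \<partial>std_gaussian) = (\<integral>\<^sup>+\<xi>. (\<integral>\<^sup>+t. norm (\<phi> t \<xi>) \<partial>std_gaussian) \<partial>lborel)"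
    by (subst GL.Fubini'[symmetric]) (auto simp: split_beta')
  also have "\<dots> \<le> (\<integral>\<^sup>+\<xi>. ennreal (D * (if \<bar>\<xi>\<bar> \<le> 1 then 1 else \<bar>\<xi>\<bar> powr (- q))) \<partial>lborel)"
    by (intro nn_integral_mono D)
  also have "\<dots> = ennreal D * (\<integral>\<^sup>+\<xi>. ennreal (if \<bar>\<xi>\<bar> \<le> 1 then 1 else \<bar>\<xi>\<bar> powr (- q)) \<partial>lborel)"
    using D_pos by (subst nn_integral_cmult[symmetric]) (auto simp: ennreal_mult)
  also have "\<dots> < \<infinity>"
    using nn_integral_powr_tail_finite[OF q] by (simp add: ennreal_mult_less_top)
  finally have "AE t in std_gaussian. (\<integral>\<^sup>+\<xi>. norm (\<phi> t \<xi>) \<partial>lborel) \<noteq> \<infinity>"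
    by (intro nn_integral_PInf_AE) auto
  then have "AE t in lborel. (\<integral>\<^sup>+\<xi>. norm (\<phi> t \<xi>) \<partial>lborel) \<noteq> \<infinity>"
    by (simp add: AE_std_gaussian_iff)
  then show ?thesis
    by eventually_elim (auto simp: \<phi>_def top.not_eq_extremum intro!: integrableI_bounded)
qed

lemma AE_occupation_measure_bounded_continuous_density:
  fixes W :: "real \<Rightarrow> real" and \<Phi> :: "real \<Rightarrow> 'a::euclidean_space" and \<alpha> c :: real
  assumes [measurable]: "W \<in> borel_measurable borel" "\<Phi> \<in> borel_measurable borel"
    and "0 < \<alpha>" "\<alpha> < 1/2" "0 < c"
    and "\<And>x y. c * dist_S1 x y powr \<alpha> \<le> norm (\<Phi> x - \<Phi> y)"
  shows "AE t in lborel. \<exists>f. (\<forall>s. 0 \<le> f s) \<and> continuous_on UNIV f \<and> bounded (range f) \<and>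
    distr unif_01 lborel (\<lambda>x. W x + t \<bullet> \<Phi> x) = density lborel (\<lambda>s. ennreal (f s))"
  using AE_integrable_char_occupation[OF assms]
proof eventually_elim
  case (elim t)
  interpret U: prob_space unif_01 by (rule prob_space_unif_01)
  have "distr unif_01 lborel (\<lambda>x. W x + t \<bullet> \<Phi> x) = distr unif_01 borel (\<lambda>x. W x + t \<bullet> \<Phi> x)"
    by (simp cong: distr_cong)
  then interpret real_distribution "distr unif_01 lborel (\<lambda>x. W x + t \<bullet> \<Phi> x)"
    by simp
  have "char (distr unif_01 lborel (\<lambda>x. W x + t \<bullet> \<Phi> x)) = (\<lambda>\<xi>. CLINT x|unif_01. iexp (\<xi> * (W x + t \<bullet> \<Phi> x)))"
    unfolding char_def by (intro ext, subst integral_distr) auto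
  then show ?case
    using integrable_char_imp_bounded_continuous_density elim by simp
qed

lemma lipschitz_S1_borel_measurable:
  assumes "lipschitz_S1 g"
  shows "g \<in> borel_measurable borel"
proof -
  obtain C where "C-lipschitz_on UNIV g"
    using assms unfolding lipschitz_S1_def by blast
  then have "continuous_on UNIV g"
    by (rule lipschitz_on_continuous_on)
  then show ?thesis
    by (rule borel_measurable_continuous_onI)
qed

lemma borel_measurable_weierstrass:
  assumes [measurable]: "g \<in> borel_measurable borel"
  shows "weierstrass \<alpha> b g \<in> borel_measurable borel"
  unfolding weierstrass_def[abs_def]
proof (rule borel_measurable_suminf)
  fix k :: nat
  have "(\<lambda>x. real b ^ k * x) \<in> borel_measurable borel"
    by (intro borel_measurable_continuous_onI continuous_intros)
  then have "(\<lambda>x. g (real b ^ k * x)) \<in> borel_measurable borel"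
    by (rule measurable_compose[OF _ assms])
  then show "(\<lambda>x. real b powr (- \<alpha> * real k) * g (real b ^ k * x)) \<in> borel_measurable borel"
    by (rule borel_measurable_times[OF borel_measurable_const])
qed

lemma borel_measurable_weierstrass_map:
  fixes G :: "'d::finite \<Rightarrow> real \<Rightarrow> real"
  assumes "\<And>i. G i \<in> borel_measurable borel"
  shows "weierstrass_map \<alpha> b G \<in> borel_measurable borel"
proof -
  have "(\<lambda>x. weierstrass_map \<alpha> b G x \<bullet> axis i 1) \<in> borel_measurable borel" for i
  proof -
    have "(\<lambda>x. weierstrass_map \<alpha> b G x \<bullet> axis i 1) = weierstrass \<alpha> b (G i)"
      by (simp add: weierstrass_map_def inner_axis fun_eq_iff)
    then show ?thesis
      using borel_measurable_weierstrass[OF assms] by simp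
  qed
  then show ?thesis
    by (intro borel_measurable_euclidean_space[THEN iffD2]) (auto simp: Basis_vec_def)
qed

lemma linf_norm_le_norm: "linf_norm v \<le> norm v"
proof -
  have "linf_norm v \<in> range (\<lambda>i. \<bar>v $ i\<bar>)"
    unfolding linf_norm_def by (rule Max_in) auto
  then show ?thesis
    using component_le_norm_cart by auto
qed

theorem theorem3p2:
  fixes b :: nat and \<alpha> :: real
    and G :: "'d::finite \<Rightarrow> real \<Rightarrow> real" and h :: "real \<Rightarrow> real"
  assumes "b \<ge> 2" and "0 < \<alpha>" and "\<alpha> < 1/2"
    and "\<forall>i. lipschitz_S1 (G i)"
    and "bi_holder \<alpha> (weierstrass_map \<alpha> b G)"
    and "lipschitz_S1 h"
  shows "AE t in (lborel :: (real ^ 'd) measure).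
           \<exists>f :: real \<Rightarrow> real. (\<forall>s. f s \<ge> 0) \<and> continuous_on UNIV f \<and> bounded (range f) \<and>
             distr (lebesgue_on {0..<1}) lborel
               (\<lambda>x. weierstrass \<alpha> b h x + t \<bullet> weierstrass_map \<alpha> b G x)
             = density lborel (\<lambda>s. ennreal (f s))"
proof -
  have [measurable]: "weierstrass \<alpha> b h \<in> borel_measurable borel"
    using assms(6) by (intro borel_measurable_weierstrass lipschitz_S1_borel_measurable)
  have [measurable]: "weierstrass_map \<alpha> b G \<in> borel_measurable borel"
    using assms(4) by (intro borel_measurable_weierstrass_map lipschitz_S1_borel_measurable) auto
  obtain c where "0 < c" and lower: "\<And>x y. c * dist_S1 x y powr \<alpha> \<le> linf_norm (weierstrass_map \<alpha> b G x - weierstrass_map \<alpha> b G y)"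
    using assms(5) unfolding bi_holder_def by blast
  have "\<And>x y. c * dist_S1 x y powr \<alpha> \<le> norm (weierstrass_map \<alpha> b G x - weierstrass_map \<alpha> b G y)"
    using lower linf_norm_le_norm order_trans by blast
  from AE_occupation_measure_bounded_continuous_density[OF _ _ assms(2,3) \<open>0 < c\<close> this]
  show ?thesis
    by (simp add: distr_lebesgue_on_eq_unif_01)
qed

end
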